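(* Let $X$ be a uniformly convex and uniformly smooth Banach space, $x\in X$, and $(x_k)\subset X$ a bounded sequence with $\liminf_k\|x_k-x\|>0$. Then $x_k\rightharpoondown x$ if and only if $(x_k-x)^*\rightharpoonup0$ weakly in $X^*$.
   Context: $x_k\rightharpoondown x$ (Δ-convergence) means: for every $y\in X$, $\limsup_{k\to\infty}(\|x_k-x\|-\|x_k-y\|)\le0$. For $z\in X\setminus\{0\}$, $z^*$ denotes the unique element of $X^*$ with $\|z^*\|=1$ and $\langle z^*,z\rangle=\|z\|$ (unique since $X^*$ is strictly convex); $(x_k-x)^*$ is defined for all large $k$. *)

theory Defs
  imports "HOL-Analysis.Analysis"
begin

(* Real Banach spaces are modelled by the type class banach; the dual space
  X* is the type of bounded linear functionals 'a \<Rightarrow>\<^sub>L real, and X** is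
  ('a \<Rightarrow>\<^sub>L real) \<Rightarrow>\<^sub>L real.*)

definition uniformly_convex :: "'a::real_normed_vector itself \<Rightarrow> bool" where
  "uniformly_convex _ \<longleftrightarrow>
     (\<forall>\<epsilon>>0. \<exists>\<delta>>0. \<forall>x y::'a. norm x \<le> 1 \<and> norm y \<le> 1 \<and> norm (x - y) \<ge> \<epsilon>
        \<longrightarrow> norm ((x + y) /\<^sub>R 2) \<le> 1 - \<delta>)"

(* Uniform smoothness: the modulus of smoothness
  rho(t) = sup {(norm (x + t y) + norm (x - t y))/2 - 1 : norm x = norm y = 1}
  satisfies rho(t)/t \<rightarrow> 0 as t \<rightarrow> 0+ (written out in epsilon-delta form).*)
definition uniformly_smooth :: "'a::real_normed_vector itself \<Rightarrow> bool" where
  "uniformly_smooth _ \<longleftrightarrow>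
     (\<forall>\<epsilon>>0. \<exists>\<delta>>0. \<forall>t. 0 < t \<and> t < \<delta> \<longrightarrow>
        (\<forall>x y::'a. norm x = 1 \<and> norm y = 1 \<longrightarrow>
           (norm (x + t *\<^sub>R y) + norm (x - t *\<^sub>R y)) / 2 - 1 \<le> \<epsilon> * t))"

definition dual_elem :: "'a::real_normed_vector \<Rightarrow> ('a \<Rightarrow>\<^sub>L real)" where
  "dual_elem z = (THE f. norm f = 1 \<and> blinfun_apply f z = norm z)"

definition Delta_converges :: "(nat \<Rightarrow> 'a::real_normed_vector) \<Rightarrow> 'a \<Rightarrow> bool" where
  "Delta_converges xs x \<longleftrightarrow>
     (\<forall>y. limsup (\<lambda>k. ereal (norm (xs k - x) - norm (xs k - y))) \<le> 0)"

definition weakly_converges :: "(nat \<Rightarrow> 'b::real_normed_vector) \<Rightarrow> 'b \<Rightarrow> bool" where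
  "weakly_converges fs f \<longleftrightarrow>
     (\<forall>\<Psi> :: 'b \<Rightarrow>\<^sub>L real. (\<lambda>k. blinfun_apply \<Psi> (fs k)) \<longlonglongrightarrow> blinfun_apply \<Psi> f)"

end

theory Submission
  imports Defs
begin

text \<open>
  For \<open>z \<noteq> 0\<close> in a uniformly smooth space the right derivative of the norm,
  \<open>v \<mapsto> lim (norm (z + t v) - norm z) / t\<close> as \<open>t \<rightarrow> 0+\<close>, is linear, hence it is the unique norming
  functional \<open>z*\<close>; by convexity \<open>norm z + z*(u) \<le> norm (z + u)\<close>. With \<open>z\<^sub>k = x\<^sub>k - x\<close> and
  \<open>u = x - y\<close> this gives \<open>norm (x\<^sub>k - x) - norm (x\<^sub>k - y) \<le> z\<^sub>k*(y - x)\<close>, so \<open>z\<^sub>k* \<rightarrow> 0\<close>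
  pointwise implies \<open>\<Delta>\<close>-convergence. Conversely, uniform smoothness bounds
  \<open>norm (z + t w) + norm (z - t w) - 2 norm z\<close> by \<open>o(t) norm w\<close> uniformly for \<open>norm z \<ge> c > 0\<close>;
  applied to \<open>y = x + t w\<close> the \<open>\<Delta>\<close>-inequality then yields \<open>limsup z\<^sub>k*(w) \<le> 0\<close> for all \<open>w\<close>.
  Finally, a uniformly convex and uniformly smooth space is reflexive, so pointwise convergence
  of functionals on \<open>X\<close> is weak convergence in \<open>X*\<close>.
\<close>

section \<open>The directional derivative of the norm\<close>

definition norm_diff_quot :: "'a::real_normed_vector \<Rightarrow> 'a \<Rightarrow> real \<Rightarrow> real" where
  "norm_diff_quot z v t = (norm (z + t *\<^sub>R v) - norm z) / t"

text \<open>The right derivative of \<open>t \<mapsto> norm (z + t v)\<close> at \<open>0\<close>: difference quotients of a convex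
  function decrease as \<open>t \<down> 0\<close>, so their infimum is the limit.\<close>
definition norm_dir_deriv :: "'a::real_normed_vector \<Rightarrow> 'a \<Rightarrow> real" where
  "norm_dir_deriv z v = Inf (norm_diff_quot z v ` {0<..})"

lemma abs_norm_diff_quot_le:
  assumes "0 < t" shows "\<bar>norm_diff_quot z v t\<bar> \<le> norm v"
proof -
  have "\<bar>norm (z + t *\<^sub>R v) - norm z\<bar> \<le> norm v * t"
    using norm_triangle_ineq3[of "z + t *\<^sub>R v" z] assms by (simp add: mult.commute)
  thus ?thesis using assms by (simp add: norm_diff_quot_def abs_divide pos_divide_le_eq)
qed

lemma norm_diff_quot_ge: "0 < t \<Longrightarrow> - norm v \<le> norm_diff_quot z v t"
  using abs_norm_diff_quot_le[of t z v] by linarith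

lemma norm_dir_deriv_le: "0 < t \<Longrightarrow> norm_dir_deriv z v \<le> norm_diff_quot z v t"
  unfolding norm_dir_deriv_def
  by (rule cInf_lower) (auto intro!: bdd_belowI[of _ "- norm v"] norm_diff_quot_ge)

lemma norm_dir_deriv_greatest:
  "(\<And>t. 0 < t \<Longrightarrow> c \<le> norm_diff_quot z v t) \<Longrightarrow> c \<le> norm_dir_deriv z v"
  unfolding norm_dir_deriv_def by (rule cInf_greatest) auto

lemma abs_norm_dir_deriv_le: "\<bar>norm_dir_deriv z v\<bar> \<le> norm v"
proof -
  have "norm_dir_deriv z v \<le> norm v"
    using norm_dir_deriv_le[of 1 z v] abs_norm_diff_quot_le[of 1 z v] by simp
  moreover have "- norm v \<le> norm_dir_deriv z v"
    by (rule norm_dir_deriv_greatest) (rule norm_diff_quot_ge)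
  ultimately show ?thesis by simp
qed

lemma norm_dir_deriv_zero [simp]: "norm_dir_deriv z 0 = 0"
  using abs_norm_dir_deriv_le[of z 0] by simp

lemma norm_dir_deriv_self: "norm_dir_deriv z z = norm z"
proof -
  have quot: "norm_diff_quot z z t = norm z" if "0 < t" for t
  proof -
    have "z + t *\<^sub>R z = (1 + t) *\<^sub>R z" by (simp add: algebra_simps)
    hence "norm (z + t *\<^sub>R z) = (1 + t) * norm z" using that by simp
    thus ?thesis using that by (simp add: norm_diff_quot_def field_simps)
  qed
  show ?thesis
    using norm_dir_deriv_le[of 1 z z] norm_dir_deriv_greatest[of "norm z" z z] quot by force
qed

lemma norm_add_ge_norm_dir_deriv: "norm z + norm_dir_deriv z u \<le> norm (z + u)"
  using norm_dir_deriv_le[of 1 z u] by (simp add: norm_diff_quot_def)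

lemma norm_diff_quot_add_le:
  assumes s: "0 < s" and s': "0 < s'"
  shows "norm_diff_quot z (v + w) (s * s' / (s + s')) \<le> norm_diff_quot z v s + norm_diff_quot z w s'"
proof -
  define t where "t = s * s' / (s + s')"
  define a where "a = s' / (s + s')"
  have "0 < t" using s s' by (simp add: t_def)
  have a: "0 < a" "a < 1" using s s' by (auto simp: a_def field_simps)
  have as: "a * s = t" "(1 - a) * s' = t"
    using s s' by (simp_all add: t_def a_def field_simps)
  have "a *\<^sub>R (z + s *\<^sub>R v) + (1 - a) *\<^sub>R (z + s' *\<^sub>R w) = z + (a * s) *\<^sub>R v + ((1 - a) * s') *\<^sub>R w"
    by (simp add: algebra_simps)
  hence "z + t *\<^sub>R (v + w) = a *\<^sub>R (z + s *\<^sub>R v) + (1 - a) *\<^sub>R (z + s' *\<^sub>R w)"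
    by (simp add: as scaleR_add_right)
  hence "norm (z + t *\<^sub>R (v + w)) \<le> a * norm (z + s *\<^sub>R v) + (1 - a) * norm (z + s' *\<^sub>R w)"
    using a by (metis abs_of_pos diff_gt_0_iff_gt norm_scaleR norm_triangle_ineq)
  hence "norm (z + t *\<^sub>R (v + w)) - norm z
      \<le> a * (norm (z + s *\<^sub>R v) - norm z) + (1 - a) * (norm (z + s' *\<^sub>R w) - norm z)"
    by (simp add: algebra_simps)
  also have "\<dots> = t * norm_diff_quot z v s + t * norm_diff_quot z w s'"
  proof -
    have "t * norm_diff_quot z v s = a * (norm (z + s *\<^sub>R v) - norm z)"
      using s unfolding norm_diff_quot_def as(1)[symmetric] by simp
    moreover have "t * norm_diff_quot z w s' = (1 - a) * (norm (z + s' *\<^sub>R w) - norm z)"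
      using s' unfolding norm_diff_quot_def as(2)[symmetric] by simp
    ultimately show ?thesis by simp
  qed
  finally show ?thesis
    using \<open>0 < t\<close> unfolding norm_diff_quot_def t_def[symmetric] by (simp add: divide_le_eq algebra_simps)
qed

lemma norm_dir_deriv_add_le: "norm_dir_deriv z (v + w) \<le> norm_dir_deriv z v + norm_dir_deriv z w"
proof -
  have "norm_dir_deriv z (v + w) - norm_diff_quot z w s' \<le> norm_dir_deriv z v" if s': "0 < s'" for s'
  proof (rule norm_dir_deriv_greatest)
    fix s :: real assume s: "0 < s"
    have "norm_dir_deriv z (v + w) \<le> norm_diff_quot z (v + w) (s * s' / (s + s'))"
      using s s' by (intro norm_dir_deriv_le) simp
    thus "norm_dir_deriv z (v + w) - norm_diff_quot z w s' \<le> norm_diff_quot z v s"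
      using norm_diff_quot_add_le[OF s s', of z v w] by simp
  qed
  hence "norm_dir_deriv z (v + w) - norm_dir_deriv z v \<le> norm_dir_deriv z w"
    by (intro norm_dir_deriv_greatest) (simp add: algebra_simps)
  thus ?thesis by simp
qed

lemma norm_dir_deriv_scaleR_pos:
  assumes c: "0 < c" shows "norm_dir_deriv z (c *\<^sub>R v) = c * norm_dir_deriv z v"
proof -
  have quot: "norm_diff_quot z (c *\<^sub>R v) t = c * norm_diff_quot z v (c * t)" if "0 < t" for t
    using that c by (simp add: norm_diff_quot_def mult.commute)
  have "norm_dir_deriv z (c *\<^sub>R v) / c \<le> norm_dir_deriv z v"
    using norm_dir_deriv_le[of "_ / c" z "c *\<^sub>R v"] quot c
    by (intro norm_dir_deriv_greatest) (simp add: divide_le_eq mult.commute)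
  moreover have "c * norm_dir_deriv z v \<le> norm_dir_deriv z (c *\<^sub>R v)"
    using norm_dir_deriv_le[of "c * _" z v] quot c by (intro norm_dir_deriv_greatest) simp
  ultimately show ?thesis using c by (simp add: divide_le_eq mult.commute)
qed

lemma le_norm_dir_deriv_if_norming:
  fixes g :: "'a::real_normed_vector \<Rightarrow>\<^sub>L real"
  assumes "norm g \<le> 1" and "g z = norm z"
  shows "g u \<le> norm_dir_deriv z u"
proof (rule norm_dir_deriv_greatest)
  fix t :: real assume t: "0 < t"
  have "g (z + t *\<^sub>R u) \<le> norm (z + t *\<^sub>R u)"
    using norm_blinfun[of g "z + t *\<^sub>R u"] assms(1) mult_left_le_one_le[of "norm (z + t *\<^sub>R u)" "norm g"]
    by simp
  thus "g u \<le> norm_diff_quot z u t"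
    using t assms(2) by (simp add: norm_diff_quot_def blinfun.add_right blinfun.scaleR_right le_divide_eq mult.commute)
qed


section \<open>Uniform smoothness and the duality map\<close>

lemma uniformly_smoothD:
  assumes "uniformly_smooth TYPE('a::real_normed_vector)" and "0 < e"
  obtains d where "0 < d"
    and "\<And>(z::'a) w t. z \<noteq> 0 \<Longrightarrow> 0 < t \<Longrightarrow> t * norm w < d * norm z \<Longrightarrow>
           norm (z + t *\<^sub>R w) + norm (z - t *\<^sub>R w) \<le> 2 * norm z + 2 * e * t * norm w"
proof -
  obtain d where d: "0 < d" and smooth: "\<And>t (x::'a) y. 0 < t \<Longrightarrow> t < d \<Longrightarrow> norm x = 1 \<Longrightarrow> norm y = 1 \<Longrightarrow>
      (norm (x + t *\<^sub>R y) + norm (x - t *\<^sub>R y)) / 2 - 1 \<le> e * t"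
    using assms unfolding uniformly_smooth_def by metis
  have "norm (z + t *\<^sub>R w) + norm (z - t *\<^sub>R w) \<le> 2 * norm z + 2 * e * t * norm w"
    if z: "z \<noteq> 0" and t: "0 < t" and small: "t * norm w < d * norm z" for z w :: 'a and t
  proof (cases "w = 0")
    case False
    define s where "s = t * norm w / norm z"
    have s: "0 < s" "s < d" using t z False small by (auto simp: s_def field_simps)
    have scale: "norm (z + c *\<^sub>R w) = norm z * norm (sgn z + (c * norm w / norm z) *\<^sub>R sgn w)" for c
    proof -
      have "z + c *\<^sub>R w = norm z *\<^sub>R (sgn z + (c * norm w / norm z) *\<^sub>R sgn w)"
        using z False by (simp add: sgn_div_norm scaleR_add_right)
      thus ?thesis by simp
    qed
    have "norm (z - t *\<^sub>R w) = norm z * norm (sgn z - s *\<^sub>R sgn w)"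
      using scale[of "- t"] by (simp add: s_def)
    hence "norm (z + t *\<^sub>R w) + norm (z - t *\<^sub>R w)
        = norm z * (norm (sgn z + s *\<^sub>R sgn w) + norm (sgn z - s *\<^sub>R sgn w))"
      using scale[of t] by (simp add: s_def distrib_left)
    also have "\<dots> \<le> norm z * (2 + 2 * e * s)"
      using smooth[OF s, of "sgn z" "sgn w"] z False by (intro mult_left_mono) (auto simp: norm_sgn field_simps)
    also have "\<dots> = 2 * norm z + 2 * e * t * norm w"
      using z by (simp add: s_def algebra_simps)
    finally show ?thesis .
  qed simp
  with d show thesis by (rule that)
qed

lemma nonpos_if_le_mult_all_pos:
  fixes x C :: real
  assumes "\<And>e. 0 < e \<Longrightarrow> x \<le> e * C"
  shows "x \<le> 0"
proof (rule field_le_epsilon)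
  fix \<eta> :: real assume \<eta>: "0 < \<eta>"
  show "x \<le> 0 + \<eta>"
  proof (cases "C \<le> 0")
    case True thus ?thesis using assms[of 1] \<eta> by simp
  next
    case False thus ?thesis using assms[of "\<eta> / C"] \<eta> by simp
  qed
qed

lemma norm_dir_deriv_uminus:
  assumes US: "uniformly_smooth TYPE('a::real_normed_vector)" and z: "(z::'a) \<noteq> 0"
  shows "norm_dir_deriv z (- v) = - norm_dir_deriv z v"
proof -
  have "0 \<le> norm_dir_deriv z v + norm_dir_deriv z (- v)"
    using norm_dir_deriv_add_le[of z v "- v"] by simp
  moreover have "norm_dir_deriv z v + norm_dir_deriv z (- v) \<le> 0"
  proof (rule nonpos_if_le_mult_all_pos)
    fix e :: real assume e: "0 < e"
    obtain d where d: "0 < d" and smooth: "\<And>(z::'a) w t. z \<noteq> 0 \<Longrightarrow> 0 < t \<Longrightarrow> t * norm w < d * norm z \<Longrightarrow>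
        norm (z + t *\<^sub>R w) + norm (z - t *\<^sub>R w) \<le> 2 * norm z + 2 * e * t * norm w"
      using uniformly_smoothD[OF US e] by metis
    define t where "t = d * norm z / (norm v + 1)"
    have nv: "0 < norm v + 1" by (simp add: add_nonneg_pos)
    have t: "0 < t" using d z nv by (simp add: t_def)
    have "t * norm v < t * (norm v + 1)" using t by simp
    also have "\<dots> = d * norm z" using nv by (simp add: t_def)
    finally have small: "t * norm v < d * norm z" .
    have "norm_dir_deriv z v + norm_dir_deriv z (- v) \<le> norm_diff_quot z v t + norm_diff_quot z (- v) t"
      using norm_dir_deriv_le[OF t, of z v] norm_dir_deriv_le[OF t, of z "- v"] by simp
    also have "\<dots> = (norm (z + t *\<^sub>R v) + norm (z - t *\<^sub>R v) - 2 * norm z) / t"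
      by (simp add: norm_diff_quot_def diff_divide_distrib add_divide_distrib)
    also have "\<dots> \<le> e * (2 * norm v)"
      using smooth[OF z t small] t by (simp add: pos_divide_le_eq algebra_simps)
    finally show "norm_dir_deriv z v + norm_dir_deriv z (- v) \<le> e * (2 * norm v)" .
  qed
  ultimately show ?thesis by linarith
qed

lemma norm_dir_deriv_add:
  assumes "uniformly_smooth TYPE('a::real_normed_vector)" and "(z::'a) \<noteq> 0"
  shows "norm_dir_deriv z (v + w) = norm_dir_deriv z v + norm_dir_deriv z w"
proof -
  have "norm_dir_deriv z (- (v + w)) \<le> norm_dir_deriv z (- v) + norm_dir_deriv z (- w)"
    using norm_dir_deriv_add_le[of z "- v" "- w"] by (metis minus_add_distrib)
  thus ?thesis
    using norm_dir_deriv_add_le[of z v w] unfolding norm_dir_deriv_uminus[OF assms] by linarith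
qed

lemma norm_dir_deriv_scaleR:
  assumes "uniformly_smooth TYPE('a::real_normed_vector)" and "(z::'a) \<noteq> 0"
  shows "norm_dir_deriv z (c *\<^sub>R v) = c * norm_dir_deriv z v"
proof (cases c "0::real" rule: linorder_cases)
  case less
  hence "norm_dir_deriv z (- ((- c) *\<^sub>R v)) = c * norm_dir_deriv z v"
    using norm_dir_deriv_uminus[OF assms] norm_dir_deriv_scaleR_pos[of "- c" z v] by simp
  thus ?thesis by simp
qed (simp_all add: norm_dir_deriv_scaleR_pos)

lemma bounded_linear_norm_dir_deriv:
  assumes "uniformly_smooth TYPE('a::real_normed_vector)" and "(z::'a) \<noteq> 0"
  shows "bounded_linear (norm_dir_deriv z)"
proof (rule bounded_linear_intro[where K = 1])
  show "norm (norm_dir_deriv z v) \<le> norm v * 1" for v using abs_norm_dir_deriv_le[of z v] by simp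
qed (simp_all add: norm_dir_deriv_add[OF assms] norm_dir_deriv_scaleR[OF assms])

lemma dual_elem_eq_Blinfun_norm_dir_deriv:
  assumes US: "uniformly_smooth TYPE('a::real_normed_vector)" and z: "(z::'a) \<noteq> 0"
  shows "dual_elem z = Blinfun (norm_dir_deriv z)"
  unfolding dual_elem_def
proof (rule the_equality)
  define F where "F = Blinfun (norm_dir_deriv z)"
  have F: "blinfun_apply F = norm_dir_deriv z"
    unfolding F_def using bounded_linear_norm_dir_deriv[OF US z] by (rule bounded_linear_Blinfun_apply)
  have "norm F \<le> 1"
    by (rule norm_blinfun_bound) (use abs_norm_dir_deriv_le in \<open>simp_all add: F\<close>)
  moreover have "norm z \<le> norm F * norm z"
    using norm_blinfun[of F z] by (simp add: F norm_dir_deriv_self)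
  ultimately show "norm F = 1 \<and> F z = norm z"
    using z by (simp add: F norm_dir_deriv_self)
  fix g :: "'a \<Rightarrow>\<^sub>L real" assume g: "norm g = 1 \<and> g z = norm z"
  show "g = F"
  proof (rule blinfun_eqI)
    fix v
    have "g v \<le> norm_dir_deriv z v" and "g (- v) \<le> norm_dir_deriv z (- v)"
      using g by (auto intro: le_norm_dir_deriv_if_norming)
    thus "g v = F v" by (simp add: F norm_dir_deriv_uminus[OF US z] blinfun.minus_right)
  qed
qed

lemma dual_elem_apply:
  assumes "uniformly_smooth TYPE('a::real_normed_vector)" and "(z::'a) \<noteq> 0"
  shows "dual_elem z u = norm_dir_deriv z u"
  by (simp add: dual_elem_eq_Blinfun_norm_dir_deriv[OF assms] bounded_linear_Blinfun_apply
      bounded_linear_norm_dir_deriv[OF assms])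


section \<open>Uniform convexity, norm attainment and reflexivity\<close>

lemma blinfun_apply_le_norm: "(\<phi> :: 'a::real_normed_vector \<Rightarrow>\<^sub>L real) x \<le> norm \<phi> * norm x"
  by (metis abs_ge_self norm_blinfun order_trans real_norm_def)

lemma norm_blinfun_le_if_unit:
  fixes \<phi> :: "'a::real_normed_vector \<Rightarrow>\<^sub>L real"
  assumes "0 \<le> B" and unit: "\<And>u. norm u = 1 \<Longrightarrow> \<phi> u \<le> B"
  shows "norm \<phi> \<le> B"
proof (rule norm_blinfun_bound[OF \<open>0 \<le> B\<close>])
  fix x :: 'a
  show "norm (\<phi> x) \<le> B * norm x"
  proof (cases "x = 0")
    case False
    have "\<phi> (sgn x) \<le> B" and "- \<phi> (sgn x) \<le> B"
      using unit[of "sgn x"] unit[of "- sgn x"] False by (simp_all add: norm_sgn blinfun.minus_right)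
    moreover have "\<phi> x = norm x * \<phi> (sgn x)"
      using blinfun.scaleR_right[of \<phi> "norm x" "sgn x"] False by (simp add: sgn_div_norm)
    ultimately show ?thesis
      by (simp add: abs_mult mult.commute[of B] mult_left_mono abs_le_iff)
  qed simp
qed

lemma exists_unit_almost_norming:
  fixes \<phi> :: "'a::real_normed_vector \<Rightarrow>\<^sub>L real"
  assumes "\<phi> \<noteq> 0" and "0 < e"
  obtains u where "norm u = 1" and "norm \<phi> - e < \<phi> u"
proof -
  have "\<not> (\<forall>u. norm u = 1 \<longrightarrow> \<phi> u \<le> norm \<phi> - e)"
  proof
    assume "\<forall>u. norm u = 1 \<longrightarrow> \<phi> u \<le> norm \<phi> - e"
    hence "norm \<phi> \<le> max (norm \<phi> - e) 0"
      by (intro norm_blinfun_le_if_unit) (auto simp: le_max_iff_disj)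
    thus False using assms by (auto simp: max_def split: if_splits)
  qed
  thus thesis using that by force
qed

lemma uniformly_convexD:
  assumes "uniformly_convex TYPE('a::real_normed_vector)" and "0 < \<epsilon>"
  obtains \<delta> where "0 < \<delta>"
    and "\<And>x y :: 'a. norm x \<le> 1 \<Longrightarrow> norm y \<le> 1 \<Longrightarrow> \<epsilon> \<le> norm (x - y) \<Longrightarrow> norm ((x + y) /\<^sub>R 2) \<le> 1 - \<delta>"
  using assms unfolding uniformly_convex_def by metis

lemma uniformly_convex_norming_sequence_Cauchy:
  fixes \<phi> :: "'a::real_normed_vector \<Rightarrow>\<^sub>L real"
  assumes UC: "uniformly_convex TYPE('a)" and "\<phi> \<noteq> 0"
    and unit: "\<And>n. norm (u n) = 1" and lim: "(\<lambda>n. \<phi> (u n)) \<longlonglongrightarrow> norm \<phi>"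
  shows "Cauchy u"
proof (rule metric_CauchyI)
  fix \<epsilon> :: real assume "0 < \<epsilon>"
  then obtain \<delta> where "0 < \<delta>" and convex: "\<And>x y :: 'a. norm x \<le> 1 \<Longrightarrow> norm y \<le> 1 \<Longrightarrow> \<epsilon> \<le> norm (x - y)
      \<Longrightarrow> norm ((x + y) /\<^sub>R 2) \<le> 1 - \<delta>"
    using uniformly_convexD[OF UC] by metis
  have "norm \<phi> * (1 - \<delta>) < norm \<phi>" using \<open>0 < \<delta>\<close> \<open>\<phi> \<noteq> 0\<close> by simp
  then obtain M where M: "\<And>n. M \<le> n \<Longrightarrow> norm \<phi> * (1 - \<delta>) < \<phi> (u n)"
    using order_tendstoD(1)[OF lim] unfolding eventually_sequentially by metis
  show "\<exists>M. \<forall>m\<ge>M. \<forall>n\<ge>M. dist (u m) (u n) < \<epsilon>"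
  proof (intro exI allI impI)
    fix m n assume "M \<le> m" "M \<le> n"
    hence "norm \<phi> * (1 - \<delta>) < \<phi> ((u m + u n) /\<^sub>R 2)"
      using M[of m] M[of n] by (simp add: blinfun.add_right blinfun.scaleR_right)
    also have "\<dots> \<le> norm \<phi> * norm ((u m + u n) /\<^sub>R 2)" by (rule blinfun_apply_le_norm)
    finally have "1 - \<delta> < norm ((u m + u n) /\<^sub>R 2)" using \<open>\<phi> \<noteq> 0\<close> by simp
    thus "dist (u m) (u n) < \<epsilon>" using convex[of "u m" "u n"] unit by (force simp: dist_norm)
  qed
qed

lemma uniformly_convex_attains_norm:
  fixes \<phi> :: "'a::banach \<Rightarrow>\<^sub>L real"
  assumes UC: "uniformly_convex TYPE('a)" and "\<phi> \<noteq> 0"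
  obtains v where "norm v = 1" and "\<phi> v = norm \<phi>"
proof -
  have "\<forall>n. \<exists>u. norm u = 1 \<and> norm \<phi> - inverse (real (Suc n)) < \<phi> u"
    using exists_unit_almost_norming[OF \<open>\<phi> \<noteq> 0\<close>] by (metis inverse_positive_iff_positive of_nat_0_less_iff zero_less_Suc)
  then obtain u where unit: "\<And>n. norm (u n) = 1"
    and almost: "\<And>n. norm \<phi> - inverse (real (Suc n)) < \<phi> (u n)"
    by metis
  have lim: "(\<lambda>n. \<phi> (u n)) \<longlonglongrightarrow> norm \<phi>"
  proof (rule tendsto_sandwich[where f = "\<lambda>n. norm \<phi> + - inverse (real (Suc n))" and h = "\<lambda>n. norm \<phi>"])
    show "\<forall>\<^sub>F n in sequentially. norm \<phi> + - inverse (real (Suc n)) \<le> \<phi> (u n)"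
      using almost by (auto intro!: always_eventually less_imp_le)
    show "\<forall>\<^sub>F n in sequentially. \<phi> (u n) \<le> norm \<phi>"
      using blinfun_apply_le_norm[of \<phi>] unit by (auto intro!: always_eventually) (metis mult.right_neutral)
    show "(\<lambda>n. norm \<phi> + - inverse (real (Suc n))) \<longlonglongrightarrow> norm \<phi>"
      by (rule LIMSEQ_inverse_real_of_nat_add_minus)
  qed simp
  have "Cauchy u" using uniformly_convex_norming_sequence_Cauchy[OF UC \<open>\<phi> \<noteq> 0\<close> unit lim] .
  then obtain v where v: "u \<longlonglongrightarrow> v" using Cauchy_convergent_iff convergent_def by blast
  have "norm v = 1" using tendsto_norm[OF v] unit by (simp add: LIMSEQ_const_iff)
  moreover have "\<phi> v = norm \<phi>"
    using LIMSEQ_unique[OF bounded_linear.tendsto[OF blinfun.bounded_linear_right v] lim] .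
  ultimately show thesis by (rule that)
qed

lemma uniformly_convex_dual:
  assumes US: "uniformly_smooth TYPE('a::real_normed_vector)"
  shows "uniformly_convex TYPE('a \<Rightarrow>\<^sub>L real)"
  unfolding uniformly_convex_def
proof (intro allI impI)
  fix \<epsilon> :: real assume \<epsilon>: "0 < \<epsilon>"
  obtain d where d: "0 < d" and smooth: "\<And>(z::'a) w t. z \<noteq> 0 \<Longrightarrow> 0 < t \<Longrightarrow> t * norm w < d * norm z \<Longrightarrow>
      norm (z + t *\<^sub>R w) + norm (z - t *\<^sub>R w) \<le> 2 * norm z + 2 * (\<epsilon> / 8) * t * norm w"
    using uniformly_smoothD[OF US, of "\<epsilon> / 8"] \<epsilon> by auto
  define t where "t = min (d / 2) 1"
  have t: "0 < t" "t < d" "t \<le> 1" using d by (auto simp: t_def)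
  show "\<exists>\<delta>>0. \<forall>f g :: 'a \<Rightarrow>\<^sub>L real. norm f \<le> 1 \<and> norm g \<le> 1 \<and> \<epsilon> \<le> norm (f - g) \<longrightarrow>
          norm ((f + g) /\<^sub>R 2) \<le> 1 - \<delta>"
  proof (intro exI[of _ "t * \<epsilon> / 8"] conjI allI impI)
    fix f g :: "'a \<Rightarrow>\<^sub>L real"
    assume fg: "norm f \<le> 1 \<and> norm g \<le> 1 \<and> \<epsilon> \<le> norm (f - g)"
    hence "f - g \<noteq> 0" using \<epsilon> by auto
    then obtain x where x: "norm x = 1" "norm (f - g) - \<epsilon> / 2 < (f - g) x"
      using exists_unit_almost_norming[of "f - g" "\<epsilon> / 2"] \<epsilon> by auto
    have "\<epsilon> \<le> 2" using fg norm_triangle_ineq4[of f g] by linarith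
    have "t * (\<epsilon> / 2) < t * (f - g) x"
      using x fg t by (intro mult_strict_left_mono) auto
    have "norm (f + g) \<le> 2 - t * \<epsilon> / 4"
    proof (rule norm_blinfun_le_if_unit)
      show "0 \<le> 2 - t * \<epsilon> / 4" using t \<open>\<epsilon> \<le> 2\<close> \<epsilon> mult_mono[of t 1 \<epsilon> 2] by simp
      fix y :: 'a assume y: "norm y = 1"
      have "(f + g) y + t * (f - g) x = f (y + t *\<^sub>R x) + g (y - t *\<^sub>R x)"
        by (simp add: blinfun.add_right blinfun.diff_right blinfun.scaleR_right
            plus_blinfun.rep_eq minus_blinfun.rep_eq algebra_simps)
      also have "\<dots> \<le> norm (y + t *\<^sub>R x) + norm (y - t *\<^sub>R x)"
        using blinfun_apply_le_norm[of f] blinfun_apply_le_norm[of g] fg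
        by (meson add_mono mult_left_le_one_le norm_ge_zero order_trans)
      also have "\<dots> \<le> 2 + 2 * (\<epsilon> / 8) * t"
        using smooth[of y t x] x y t by (metis mult.commute mult_1 norm_zero zero_neq_one)
      finally show "(f + g) y \<le> 2 - t * \<epsilon> / 4"
        using \<open>t * (\<epsilon> / 2) < t * (f - g) x\<close> by (simp add: algebra_simps)
    qed
    thus "norm ((f + g) /\<^sub>R 2) \<le> 1 - t * \<epsilon> / 8" by (simp add: mult.commute)
  qed (use t \<epsilon> in simp)
qed

text \<open>The dual norm is differentiable at every \<open>f\<close> attaining its norm at \<open>v\<close>, with derivative
  \<open>g \<mapsto> g v\<close>: a unit vector on which \<open>f + \<tau> g\<close> is large must lie close to \<open>v\<close>.\<close>
lemma norm_blinfun_add_scaleR_le: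
  fixes f :: "'a::real_normed_vector \<Rightarrow>\<^sub>L real"
  assumes UC: "uniformly_convex TYPE('a)" and f: "norm f \<le> 1"
    and v: "norm v = 1" "f v = 1" and "0 < \<epsilon>"
  obtains \<delta> where "0 < \<delta>"
    and "\<And>g \<tau>. \<bar>\<tau>\<bar> * norm g \<le> \<delta> \<Longrightarrow> norm (f + \<tau> *\<^sub>R g) \<le> 1 + \<tau> * g v + \<bar>\<tau>\<bar> * norm g * \<epsilon>"
proof -
  obtain \<delta>0 where "0 < \<delta>0" and convex: "\<And>x y :: 'a. norm x \<le> 1 \<Longrightarrow> norm y \<le> 1 \<Longrightarrow> \<epsilon> \<le> norm (x - y)
      \<Longrightarrow> norm ((x + y) /\<^sub>R 2) \<le> 1 - \<delta>0"
    using uniformly_convexD[OF UC \<open>0 < \<epsilon>\<close>] by metis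
  define \<delta> where "\<delta> = min \<delta>0 1"
  have f_le: "f u \<le> norm u" for u
    using blinfun_apply_le_norm[of f u] f by (meson mult_left_le_one_le norm_ge_zero order_trans)
  have "norm (f + \<tau> *\<^sub>R g) \<le> 1 + \<tau> * g v + \<bar>\<tau>\<bar> * norm g * \<epsilon>"
    if small: "\<bar>\<tau>\<bar> * norm g \<le> \<delta>" for g \<tau>
  proof (rule norm_blinfun_le_if_unit)
    have g_le: "\<bar>\<tau> * g u\<bar> \<le> \<bar>\<tau>\<bar> * norm g * norm u" for u
      by (metis abs_ge_zero abs_mult mult.assoc mult_left_mono norm_blinfun real_norm_def)
    have "0 \<le> \<bar>\<tau>\<bar> * norm g * \<epsilon>" using \<open>0 < \<epsilon>\<close> by simp
    hence lower: "1 - \<delta> \<le> 1 + \<tau> * g v + \<bar>\<tau>\<bar> * norm g * \<epsilon>"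
      using g_le[of v] v small by (simp add: abs_le_iff)
    thus "0 \<le> 1 + \<tau> * g v + \<bar>\<tau>\<bar> * norm g * \<epsilon>" by (simp add: \<delta>_def)
    fix u :: 'a assume u: "norm u = 1"
    show "(f + \<tau> *\<^sub>R g) u \<le> 1 + \<tau> * g v + \<bar>\<tau>\<bar> * norm g * \<epsilon>"
    proof (cases "norm (u - v) < \<epsilon>")
      case True
      have "\<tau> * g u - \<tau> * g v = \<tau> * g (u - v)" by (simp add: blinfun.diff_right algebra_simps)
      also have "\<dots> \<le> \<bar>\<tau>\<bar> * norm g * norm (u - v)" by (rule abs_le_D1[OF g_le])
      also have "\<dots> \<le> \<bar>\<tau>\<bar> * norm g * \<epsilon>" using True by (intro mult_left_mono) auto
      finally show ?thesis using f_le[of u] u by (simp add: blinfun.add_left blinfun.scaleR_left)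
    next
      case False
      hence "norm ((u + v) /\<^sub>R 2) \<le> 1 - \<delta>0" using convex[of u v] u v by simp
      moreover have "f ((u + v) /\<^sub>R 2) = (f u + 1) / 2"
        using v by (simp add: blinfun.add_right blinfun.scaleR_right)
      ultimately have "f u \<le> 1 - 2 * \<delta>" using f_le[of "(u + v) /\<^sub>R 2"] by (simp add: \<delta>_def)
      moreover have "\<tau> * g u \<le> \<delta>" using g_le[of u] u small by simp
      ultimately show ?thesis using lower by (simp add: blinfun.add_left blinfun.scaleR_left)
    qed
  qed
  moreover have "0 < \<delta>" using \<open>0 < \<delta>0\<close> by (simp add: \<delta>_def)
  ultimately show thesis using that by blast
qed

text \<open>\<open>\<Psi>\<close> attains its norm at some \<open>f\<close> since \<open>X*\<close> is uniformly convex, \<open>f\<close> attains its norm at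
  some \<open>v\<close>, and differentiability of the dual norm at \<open>f\<close> forces \<open>\<Psi> = norm \<Psi> \<cdot> (evaluation at v)\<close>.\<close>
lemma uniformly_convex_smooth_reflexive:
  fixes \<Psi> :: "('a::banach \<Rightarrow>\<^sub>L real) \<Rightarrow>\<^sub>L real"
  assumes UC: "uniformly_convex TYPE('a)" and US: "uniformly_smooth TYPE('a)"
  obtains v where "\<And>g. \<Psi> g = g v"
proof (cases "\<Psi> = 0")
  case True thus thesis using that[of 0] by simp
next
  case False
  obtain f where f: "norm f = 1" "\<Psi> f = norm \<Psi>"
    using uniformly_convex_attains_norm[OF uniformly_convex_dual[OF US] False] by metis
  then obtain v where v: "norm v = 1" "f v = 1"
    using uniformly_convex_attains_norm[OF UC, of f] by force
  have "\<bar>\<Psi> g - norm \<Psi> * g v\<bar> \<le> 0" for g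
  proof (rule nonpos_if_le_mult_all_pos)
    fix \<epsilon> :: real assume "0 < \<epsilon>"
    then obtain \<delta> where "0 < \<delta>"
      and expand: "\<And>g \<tau>. \<bar>\<tau>\<bar> * norm g \<le> \<delta> \<Longrightarrow> norm (f + \<tau> *\<^sub>R g) \<le> 1 + \<tau> * g v + \<bar>\<tau>\<bar> * norm g * \<epsilon>"
      using norm_blinfun_add_scaleR_le[OF UC _ v] f by (metis order_refl)
    define t where "t = \<delta> / (norm g + 1)"
    have nz: "0 < norm g + 1" by (simp add: add_nonneg_pos)
    have t: "0 < t" "t * norm g \<le> \<delta>"
      using \<open>0 < \<delta>\<close> nz by (simp_all add: t_def field_simps)
    have bound: "\<tau> * \<Psi> g \<le> norm \<Psi> * (\<tau> * g v + t * norm g * \<epsilon>)" if "\<bar>\<tau>\<bar> = t" for \<tau>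
    proof -
      have "norm \<Psi> + \<tau> * \<Psi> g = \<Psi> (f + \<tau> *\<^sub>R g)"
        using f by (simp add: blinfun.add_right blinfun.scaleR_right)
      also have "\<dots> \<le> norm \<Psi> * norm (f + \<tau> *\<^sub>R g)" by (rule blinfun_apply_le_norm)
      also have "\<dots> \<le> norm \<Psi> * (1 + \<tau> * g v + t * norm g * \<epsilon>)"
        using expand[of \<tau> g] that t by (simp add: mult_left_mono)
      finally show ?thesis by (simp add: algebra_simps)
    qed
    have "t * (\<Psi> g - norm \<Psi> * g v) \<le> t * (\<epsilon> * (norm \<Psi> * norm g))"
      and "t * (norm \<Psi> * g v - \<Psi> g) \<le> t * (\<epsilon> * (norm \<Psi> * norm g))"
      using bound[of t] bound[of "- t"] t by (simp_all add: algebra_simps)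
    thus "\<bar>\<Psi> g - norm \<Psi> * g v\<bar> \<le> \<epsilon> * (norm \<Psi> * norm g)"
      using t by (simp add: abs_le_iff)
  qed
  thus thesis by (intro that[of "norm \<Psi> *\<^sub>R v"]) (simp add: blinfun.scaleR_right)
qed


section \<open>\<open>\<Delta>\<close>-convergence\<close>

lemma Delta_converges_iff:
  "Delta_converges xs x \<longleftrightarrow>
     (\<forall>y e. 0 < e \<longrightarrow> (\<forall>\<^sub>F k in sequentially. norm (xs k - x) - norm (xs k - y) < e))"
proof (intro iffI allI impI)
  fix y and e :: real assume "Delta_converges xs x" and "0 < e"
  hence "limsup (\<lambda>k. ereal (norm (xs k - x) - norm (xs k - y))) \<le> 0"
    unfolding Delta_converges_def by blast
  also have "\<dots> < ereal e" using \<open>0 < e\<close> by simp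
  finally have "limsup (\<lambda>k. ereal (norm (xs k - x) - norm (xs k - y))) < ereal e" .
  hence "\<forall>\<^sub>F k in sequentially. ereal (norm (xs k - x) - norm (xs k - y)) < ereal e"
    by (rule Limsup_lessD)
  thus "\<forall>\<^sub>F k in sequentially. norm (xs k - x) - norm (xs k - y) < e"
    by (simp only: less_ereal.simps)
next
  assume ev: "\<forall>y e. 0 < e \<longrightarrow> (\<forall>\<^sub>F k in sequentially. norm (xs k - x) - norm (xs k - y) < e)"
  show "Delta_converges xs x"
    unfolding Delta_converges_def
  proof (intro allI, rule ereal_le_epsilon2)
    fix y and e :: real assume "0 < e"
    have "\<forall>\<^sub>F k in sequentially. ereal (norm (xs k - x) - norm (xs k - y)) \<le> ereal e"
      using ev[rule_format, OF \<open>0 < e\<close>, of y] by (rule eventually_mono) simp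
    hence "limsup (\<lambda>k. ereal (norm (xs k - x) - norm (xs k - y))) \<le> ereal e"
      by (rule Limsup_bounded)
    thus "limsup (\<lambda>k. ereal (norm (xs k - x) - norm (xs k - y))) \<le> 0 + ereal e" by simp
  qed
qed

lemma dual_elem_apply_eventually_less_if_Delta_converges:
  assumes US: "uniformly_smooth TYPE('a::real_normed_vector)" and D: "Delta_converges xs x"
    and "0 < c" and far: "\<forall>\<^sub>F k in sequentially. c \<le> norm (xs k - (x::'a))" and "0 < \<epsilon>"
  shows "\<forall>\<^sub>F k in sequentially. dual_elem (xs k - x) w < \<epsilon>"
proof -
  define e where "e = \<epsilon> / (1 + 2 * norm w)"
  have "0 < 1 + 2 * norm w" by (simp add: add_pos_nonneg)
  hence e: "0 < e" "e * (1 + 2 * norm w) = \<epsilon>" using \<open>0 < \<epsilon>\<close> by (simp_all add: e_def)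
  obtain d where "0 < d" and smooth: "\<And>(z::'a) w t. z \<noteq> 0 \<Longrightarrow> 0 < t \<Longrightarrow> t * norm w < d * norm z \<Longrightarrow>
      norm (z + t *\<^sub>R w) + norm (z - t *\<^sub>R w) \<le> 2 * norm z + 2 * e * t * norm w"
    using uniformly_smoothD[OF US e(1)] by metis
  define t where "t = d * c / (norm w + 1)"
  have nw: "0 < norm w + 1" by (simp add: add_nonneg_pos)
  have t: "0 < t" using \<open>0 < d\<close> \<open>0 < c\<close> nw by (simp add: t_def)
  have "t * norm w < t * (norm w + 1)" using t by simp
  also have "\<dots> = d * c" using nw by (simp add: t_def)
  finally have small: "t * norm w < d * c" .
  \<comment> \<open>Testing at \<open>y = x + t w\<close> bounds \<open>norm z - norm (z - t w)\<close>; smoothness transfers the bound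
    to \<open>norm (z + t w) - norm z \<ge> t z*(w)\<close>.\<close>
  have "\<forall>\<^sub>F k in sequentially. norm (xs k - x) - norm (xs k - (x + t *\<^sub>R w)) < t * e"
    using D e t by (simp add: Delta_converges_iff)
  thus ?thesis using far
  proof eventually_elim
    case (elim k)
    define z where "z = xs k - x"
    have "z \<noteq> 0" using elim \<open>0 < c\<close> by (auto simp: z_def)
    have "d * c \<le> d * norm z" using elim(2) \<open>0 < d\<close> by (simp add: z_def)
    with small have "t * norm w < d * norm z" by linarith
    have "t * dual_elem z w \<le> norm (z + t *\<^sub>R w) - norm z"
      using norm_dir_deriv_le[OF t, of z w] t
      by (simp add: dual_elem_apply[OF US \<open>z \<noteq> 0\<close>] norm_diff_quot_def pos_le_divide_eq mult.commute)
    also have "\<dots> \<le> norm z - norm (z - t *\<^sub>R w) + 2 * e * t * norm w"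
      using smooth[OF \<open>z \<noteq> 0\<close> t \<open>t * norm w < d * norm z\<close>] by simp
    also have "\<dots> < t * \<epsilon>"
      using elim(1) by (simp add: z_def algebra_simps flip: e(2))
    finally show ?case using t by (simp add: z_def)
  qed
qed

lemma dual_elem_apply_tendsto_zero_if_Delta_converges:
  assumes US: "uniformly_smooth TYPE('a::real_normed_vector)" and D: "Delta_converges xs x"
    and "0 < c" and far: "\<forall>\<^sub>F k in sequentially. c \<le> norm (xs k - (x::'a))"
  shows "(\<lambda>k. dual_elem (xs k - x) w) \<longlonglongrightarrow> 0"
proof (rule tendstoI)
  fix \<epsilon> :: real assume "0 < \<epsilon>"
  note less = dual_elem_apply_eventually_less_if_Delta_converges[OF US D \<open>0 < c\<close> far this]
  from less[of w] less[of "- w"]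
  show "\<forall>\<^sub>F k in sequentially. dist (dual_elem (xs k - x) w) 0 < \<epsilon>"
    by eventually_elim (simp add: blinfun.minus_right)
qed

lemma Delta_converges_if_dual_elem_apply_tendsto_zero:
  assumes US: "uniformly_smooth TYPE('a::real_normed_vector)"
    and nz: "\<forall>\<^sub>F k in sequentially. xs k \<noteq> (x::'a)"
    and lim: "\<And>w. (\<lambda>k. dual_elem (xs k - x) w) \<longlonglongrightarrow> 0"
  shows "Delta_converges xs x"
  unfolding Delta_converges_iff
proof (intro allI impI)
  fix y and e :: real assume "0 < e"
  have "\<forall>\<^sub>F k in sequentially. dual_elem (xs k - x) (y - x) < e"
    using order_tendstoD(2)[OF lim \<open>0 < e\<close>] .
  thus "\<forall>\<^sub>F k in sequentially. norm (xs k - x) - norm (xs k - y) < e"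
    using nz
  proof eventually_elim
    case (elim k)
    hence z: "xs k - x \<noteq> 0" by simp
    have "norm (xs k - x) + norm_dir_deriv (xs k - x) (x - y) \<le> norm (xs k - y)"
      using norm_add_ge_norm_dir_deriv[of "xs k - x" "x - y"] by simp
    moreover have "norm_dir_deriv (xs k - x) (x - y) = - dual_elem (xs k - x) (y - x)"
      using norm_dir_deriv_uminus[OF US z, of "y - x"] by (simp add: dual_elem_apply[OF US z])
    ultimately show ?case using elim by simp
  qed
qed

lemma weakly_converges_zero_iff_apply:
  fixes fs :: "nat \<Rightarrow> 'a::banach \<Rightarrow>\<^sub>L real"
  assumes UC: "uniformly_convex TYPE('a)" and US: "uniformly_smooth TYPE('a)"
  shows "weakly_converges fs 0 \<longleftrightarrow> (\<forall>w. (\<lambda>k. fs k w) \<longlonglongrightarrow> 0)"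
proof (intro iffI allI)
  fix w assume "weakly_converges fs 0"
  define \<Psi> where "\<Psi> = Blinfun (\<lambda>g::'a \<Rightarrow>\<^sub>L real. g w)"
  have \<Psi>: "\<Psi> g = g w" for g
    unfolding \<Psi>_def by (subst bounded_linear_Blinfun_apply) simp_all
  show "(\<lambda>k. fs k w) \<longlonglongrightarrow> 0"
    using \<open>weakly_converges fs 0\<close>[unfolded weakly_converges_def, rule_format, of \<Psi>] by (simp add: \<Psi>)
next
  assume lim: "\<forall>w. (\<lambda>k. fs k w) \<longlonglongrightarrow> 0"
  show "weakly_converges fs 0"
    unfolding weakly_converges_def
  proof
    fix \<Psi> :: "('a \<Rightarrow>\<^sub>L real) \<Rightarrow>\<^sub>L real"
    obtain v where "\<And>g. \<Psi> g = g v" using uniformly_convex_smooth_reflexive[OF UC US, where \<Psi> = \<Psi>] by blast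
    thus "(\<lambda>k. \<Psi> (fs k)) \<longlonglongrightarrow> \<Psi> 0" using lim by simp
  qed
qed

theorem theorem3p8:
  fixes x :: "'a::banach" and xs :: "nat \<Rightarrow> 'a"
  assumes "uniformly_convex TYPE('a)" and "uniformly_smooth TYPE('a)"
    and "bounded (range xs)"
    and "liminf (\<lambda>k. ereal (norm (xs k - x))) > 0"
  shows "Delta_converges xs x \<longleftrightarrow> weakly_converges (\<lambda>k. dual_elem (xs k - x)) 0"
proof -
  obtain c where "0 < c" and "ereal c < liminf (\<lambda>k. ereal (norm (xs k - x)))"
    using ereal_dense2[OF assms(4)] by (metis ereal_less(2) zero_ereal_def)
  from less_LiminfD[OF this(2)] have far: "\<forall>\<^sub>F k in sequentially. c \<le> norm (xs k - x)"
    by (rule eventually_mono) simp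
  hence "\<forall>\<^sub>F k in sequentially. xs k \<noteq> x"
    by (rule eventually_mono) (use \<open>0 < c\<close> in auto)
  thus ?thesis
    unfolding weakly_converges_zero_iff_apply[OF assms(1,2)]
    using dual_elem_apply_tendsto_zero_if_Delta_converges[OF assms(2) _ \<open>0 < c\<close> far]
      Delta_converges_if_dual_elem_apply_tendsto_zero[OF assms(2)]
    by blast
qed

end
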